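(* Let $k\ge 0$ be an integer and let $G$ be a graph with $\mu_\alpha(G)\leq k$. Then every internal vertex of $G$ is adjacent to at most $k+1$ leaves.
   Context: All graphs are finite and simple. For a graph $H$, $\alpha(H)$ is the maximum size of an independent set, $i(H)$ the minimum size of an inclusion-maximal independent set, and $\mu_\alpha(H)=\alpha(H)-i(H)$. Let $U$ be the set of vertices of $G$ whose connected component is a complete graph. In $G-U$, vertices of degree $1$ are called leaves and the others are called internal vertices. *)

theory Defs
  imports Main
begin

definition graph :: "'a set \<Rightarrow> ('a \<Rightarrow> 'a \<Rightarrow> bool) \<Rightarrow> bool" where
  "graph V E \<longleftrightarrow> finite V \<and> (\<forall>x y. E x y \<longrightarrow> x \<in> V \<and> y \<in> V)
     \<and> (\<forall>x y. E x y \<longrightarrow> E y x) \<and> (\<forall>x. \<not> E x x)"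

definition indep :: "'a set \<Rightarrow> ('a \<Rightarrow> 'a \<Rightarrow> bool) \<Rightarrow> 'a set \<Rightarrow> bool" where
  "indep V E S \<longleftrightarrow> S \<subseteq> V \<and> (\<forall>x\<in>S. \<forall>y\<in>S. \<not> E x y)"

definition maximal_indep :: "'a set \<Rightarrow> ('a \<Rightarrow> 'a \<Rightarrow> bool) \<Rightarrow> 'a set \<Rightarrow> bool" where
  "maximal_indep V E S \<longleftrightarrow> indep V E S \<and> (\<forall>T. indep V E T \<and> S \<subseteq> T \<longrightarrow> T = S)"

definition alpha :: "'a set \<Rightarrow> ('a \<Rightarrow> 'a \<Rightarrow> bool) \<Rightarrow> nat" where
  "alpha V E = Max (card ` {S. indep V E S})"

definition idom :: "'a set \<Rightarrow> ('a \<Rightarrow> 'a \<Rightarrow> bool) \<Rightarrow> nat" where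
  "idom V E = Min (card ` {S. maximal_indep V E S})"

definition mu_alpha :: "'a set \<Rightarrow> ('a \<Rightarrow> 'a \<Rightarrow> bool) \<Rightarrow> nat" where
  "mu_alpha V E = alpha V E - idom V E"

definition component :: "'a set \<Rightarrow> ('a \<Rightarrow> 'a \<Rightarrow> bool) \<Rightarrow> 'a \<Rightarrow> 'a set" where
  "component V E v = {u. E\<^sup>*\<^sup>* v u}"

definition Ucomp :: "'a set \<Rightarrow> ('a \<Rightarrow> 'a \<Rightarrow> bool) \<Rightarrow> 'a set" where
  "Ucomp V E = {v \<in> V. \<forall>x\<in>component V E v. \<forall>y\<in>component V E v. x \<noteq> y \<longrightarrow> E x y}"

definition degGU :: "'a set \<Rightarrow> ('a \<Rightarrow> 'a \<Rightarrow> bool) \<Rightarrow> 'a \<Rightarrow> nat" where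
  "degGU V E v = card {u \<in> V - Ucomp V E. E v u}"

definition leaf :: "'a set \<Rightarrow> ('a \<Rightarrow> 'a \<Rightarrow> bool) \<Rightarrow> 'a \<Rightarrow> bool" where
  "leaf V E v \<longleftrightarrow> v \<in> V - Ucomp V E \<and> degGU V E v = 1"

definition internal :: "'a set \<Rightarrow> ('a \<Rightarrow> 'a \<Rightarrow> bool) \<Rightarrow> 'a \<Rightarrow> bool" where
  "internal V E v \<longleftrightarrow> v \<in> V - Ucomp V E \<and> degGU V E v \<noteq> 1"

end

theory Submission
  imports Defs
begin

text \<open>Extend \<open>{v}\<close> to a maximal independent set \<open>M\<close>. The leaves adjacent to the internal
  vertex \<open>v\<close> have \<open>v\<close> as their only neighbour, so exchanging \<open>v\<close> for all of them in \<open>M\<close>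
  yields an independent set. Hence \<open>\<alpha>(G) \<ge> |M| - 1 + \<ell> \<ge> i(G) - 1 + \<ell>\<close>, where \<open>\<ell>\<close> is the
  number of those leaves, i.e. \<open>\<ell> \<le> \<mu>\<^sub>\<alpha>(G) + 1\<close>.\<close>

lemma graph_sym: "graph V E \<Longrightarrow> E x y \<Longrightarrow> E y x"
  and graph_irrefl: "graph V E \<Longrightarrow> \<not> E x x"
  and graph_edge_in_V: "graph V E \<Longrightarrow> E x y \<Longrightarrow> x \<in> V \<and> y \<in> V"
  and graph_finite: "graph V E \<Longrightarrow> finite V"
  unfolding graph_def by blast+

lemma component_eq_if_edge:
  assumes "graph V E" and "E u w"
  shows "component V E u = component V E w"
proof -
  have "E w u" using assms by (rule graph_sym)
  then have "E\<^sup>*\<^sup>* u x \<longleftrightarrow> E\<^sup>*\<^sup>* w x" for x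
    using \<open>E u w\<close> by (metis converse_rtranclp_into_rtranclp)
  then show ?thesis unfolding component_def by auto
qed

lemma Ucomp_if_edge_Ucomp:
  assumes "graph V E" and "E u w" and "w \<in> Ucomp V E"
  shows "u \<in> Ucomp V E"
  using assms component_eq_if_edge[OF assms(1,2)] graph_edge_in_V[OF assms(1,2)]
  unfolding Ucomp_def by auto

lemma leaf_neighbour_unique:
  assumes g: "graph V E" and "leaf V E u" and "E u v" and "E u w"
  shows "w = v"
proof -
  have "u \<notin> Ucomp V E" using \<open>leaf V E u\<close> unfolding leaf_def by simp
  then have "v \<notin> Ucomp V E" "w \<notin> Ucomp V E"
    using Ucomp_if_edge_Ucomp[OF g] \<open>E u v\<close> \<open>E u w\<close> by blast+
  then have "v \<in> {x \<in> V - Ucomp V E. E u x}" "w \<in> {x \<in> V - Ucomp V E. E u x}"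
    using graph_edge_in_V[OF g] \<open>E u v\<close> \<open>E u w\<close> by auto
  moreover have "card {x \<in> V - Ucomp V E. E u x} = 1"
    using \<open>leaf V E u\<close> unfolding leaf_def degGU_def by simp
  ultimately show ?thesis by (metis card_1_singletonE singletonD)
qed

lemma finite_indep_sets: "graph V E \<Longrightarrow> finite {S. indep V E S}"
  unfolding indep_def by (simp add: graph_finite)

lemma finite_indep: "graph V E \<Longrightarrow> indep V E S \<Longrightarrow> finite S"
  unfolding indep_def using graph_finite finite_subset by blast

lemma card_le_alpha:
  assumes "graph V E" and "indep V E S"
  shows "card S \<le> alpha V E"
  unfolding alpha_def
  using assms by (intro Max_ge finite_imageI finite_indep_sets) auto

lemma idom_le_card:
  assumes "graph V E" and "maximal_indep V E M"
  shows "idom V E \<le> card M"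
proof -
  have "finite {S. maximal_indep V E S}"
    using finite_indep_sets[OF assms(1)] unfolding maximal_indep_def
    by (rule rev_finite_subset) blast
  then show ?thesis unfolding idom_def using assms(2) by (simp add: Min_le)
qed

lemma maximal_indep_superset:
  assumes "graph V E" and "indep V E S"
  obtains M where "maximal_indep V E M" and "S \<subseteq> M"
proof -
  obtain M where "indep V E M" "S \<subseteq> M" and "\<forall>T. indep V E T \<and> M \<subseteq> T \<longrightarrow> M = T"
    using finite_has_maximal2[OF finite_indep_sets[OF assms(1)], of S] assms(2) by auto
  then show thesis using that unfolding maximal_indep_def by blast
qed

lemma indep_exchange_pendants:
  assumes g: "graph V E" and "indep V E M" and "v \<in> M" and "L \<subseteq> V"
    and pendant: "\<And>u w. u \<in> L \<Longrightarrow> E u w \<Longrightarrow> w = v"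
  shows "indep V E ((M - {v}) \<union> L)"
  unfolding indep_def
proof (intro conjI ballI notI)
  show "M - {v} \<union> L \<subseteq> V" using assms unfolding indep_def by auto
next
  fix x y assume x: "x \<in> M - {v} \<union> L" and y: "y \<in> M - {v} \<union> L" and "E x y"
  have "E y x" using g \<open>E x y\<close> by (rule graph_sym)
  show False
  proof (cases "x \<in> L")
    case True
    then have "y = v" using pendant \<open>E x y\<close> by blast
    with y have "y \<in> L" by blast
    then have "x = v" using pendant \<open>E y x\<close> by blast
    with \<open>y = v\<close> \<open>E x y\<close> show False using graph_irrefl[OF g] by simp
  next
    case False
    with x have "x \<in> M" "x \<noteq> v" by auto
    show False
    proof (cases "y \<in> L")
      case True
      then show False using pendant \<open>E y x\<close> \<open>x \<noteq> v\<close> by blast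
    next
      case False
      with y have "y \<in> M" by blast
      with \<open>x \<in> M\<close> \<open>E x y\<close> \<open>indep V E M\<close> show False unfolding indep_def by blast
    qed
  qed
qed

lemma card_exchange_pendants:
  assumes "graph V E" and "indep V E M" and "v \<in> M" and "finite L"
    and "\<And>u. u \<in> L \<Longrightarrow> E v u"
  shows "card ((M - {v}) \<union> L) = card M - 1 + card L"
proof -
  have "finite M" using assms(1,2) by (rule finite_indep)
  moreover have "(M - {v}) \<inter> L = {}"
    using assms(2,3,5) unfolding indep_def by blast
  ultimately show ?thesis using assms(3,4) by (simp add: card_Un_disjoint)
qed

theorem lemma5:
  fixes V :: "'a set" and E :: "'a \<Rightarrow> 'a \<Rightarrow> bool" and k :: nat and v :: 'a
  assumes "graph V E"
    and "mu_alpha V E \<le> k"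
    and "internal V E v"
  shows "card {u. leaf V E u \<and> E v u} \<le> k + 1"
proof -
  define L where "L = {u. leaf V E u \<and> E v u}"
  have "L \<subseteq> V" unfolding L_def leaf_def by auto
  then have "finite L" using assms(1) graph_finite finite_subset by blast
  have "v \<in> V" using assms(3) unfolding internal_def by simp
    \<comment> \<open>nothing else about \<open>v\<close> being internal is needed\<close>
  then have "indep V E {v}" unfolding indep_def using graph_irrefl[OF assms(1)] by simp
  then obtain M where M: "maximal_indep V E M" and "v \<in> M"
    using maximal_indep_superset[OF assms(1)] by blast
  then have "indep V E M" "M \<noteq> {}" unfolding maximal_indep_def by auto
  have "w = v" if "u \<in> L" and "E u w" for u w
  proof -
    have "leaf V E u" "E u v" using \<open>u \<in> L\<close> graph_sym[OF assms(1)] unfolding L_def by auto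
    then show ?thesis using leaf_neighbour_unique[OF assms(1)] \<open>E u w\<close> by blast
  qed
  then have "indep V E ((M - {v}) \<union> L)"
    using indep_exchange_pendants[OF assms(1) \<open>indep V E M\<close> \<open>v \<in> M\<close> \<open>L \<subseteq> V\<close>] by blast
  then have "card ((M - {v}) \<union> L) \<le> alpha V E" by (rule card_le_alpha[OF assms(1)])
  moreover have "card ((M - {v}) \<union> L) = card M - 1 + card L"
    using card_exchange_pendants[OF assms(1) \<open>indep V E M\<close> \<open>v \<in> M\<close> \<open>finite L\<close>]
    unfolding L_def by blast
  moreover have "idom V E \<le> card M" using assms(1) M by (rule idom_le_card)
  moreover have "card M \<ge> 1"
    using \<open>M \<noteq> {}\<close> finite_indep[OF assms(1) \<open>indep V E M\<close>]
    by (simp add: Suc_le_eq card_gt_0_iff)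
  ultimately show ?thesis using assms(2) unfolding mu_alpha_def L_def by linarith
qed

end
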